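(* Let $\alpha,\beta\in[0,r]\cap A$ with $\alpha<\beta$, and $I=(\alpha,\beta)$. Let $x\in\mathbf F_I$ with $\mathrm{fix}(x)\cap I\cap A=\varnothing$, and let $C$ be the centralizer of $x$ in $\mathbf F_I$. Let $\phi\colon\mathbf F_I\to\Lambda$ be $y\mapsto(\alpha)y'^{+}$. Then $\phi$ is a group homomorphism and its restriction to $C$ is injective. The same holds for $\phi\colon\mathbf F_I\to\Lambda$, $y\mapsto(\beta)y'^{-}$.
   Context: Maps act on the right. Fix real $r>0$, a subgroup $\Lambda\neq\{1\}$ of $\mathbb R^*_+$, and an additive subgroup $A\subseteq\mathbb R$ with $r\in A$ and $\lambda A\subseteq A$ for $\lambda\in\Lambda$. $\mathbf F=\mathbf F(r,\Lambda,A)$ is the group of homeomorphisms $x\colon[0,r)\to[0,r)$ that are piecewise affine with finitely many breakpoints, all slopes in $\Lambda$, and all breakpoints and their images in $A$; each extends uniquely to a homeomorphism of $[0,r]$. For a permutation $x$, $\mathrm{fix}(x)$ is its fixed point set and $\mathrm{supp}(x)$ its complement. For $S\subseteq[0,r)$, $\mathbf F_S=\{x\in\mathbf F\mid\mathrm{supp}(x)\subseteq S\}$. For a map $g$ affine on an open interval $(\gamma,\delta)$, $(\gamma)g'^{+}$ and $(\delta)g'^{-}$ denote the slope of $g$ there (at $r$ one uses the extension to $[0,r]$). *)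

theory Defs
  imports "HOL-Analysis.Analysis"
begin

text \<open>Elements of F(r,Lambda,A) are represented as functions real => real that are
  the identity outside [0,r).  Maps act on the right: the product x y (first x, then y)
  is the function composition y o x.\<close>

definition PL_F :: "real \<Rightarrow> real set \<Rightarrow> real set \<Rightarrow> (real \<Rightarrow> real) set" where
  "PL_F r \<Lambda> A = {f.
     (\<forall>t. t \<notin> {0..<r} \<longrightarrow> f t = t) \<and>
     (\<exists>g. homeomorphism {0..<r} {0..<r} f g) \<and>
     (\<exists>ps :: real list. ps \<noteq> [] \<and> sorted_wrt (<) ps \<and> hd ps = 0 \<and> last ps = r \<and>
        set ps \<subseteq> A \<and> f ` set ps \<subseteq> A \<and>
        (\<forall>i < length ps - 1. \<exists>l\<in>\<Lambda>. \<exists>c. \<forall>t\<in>{ps!i..<ps!(i+1)}. f t = l * t + c))}"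

definition supp :: "(real \<Rightarrow> real) \<Rightarrow> real set" where
  "supp f = {t. f t \<noteq> t}"

definition fixset :: "(real \<Rightarrow> real) \<Rightarrow> real set" where
  "fixset f = {t. f t = t}"

definition PL_F_on :: "real \<Rightarrow> real set \<Rightarrow> real set \<Rightarrow> real set \<Rightarrow> (real \<Rightarrow> real) set" where
  "PL_F_on r \<Lambda> A S = {f \<in> PL_F r \<Lambda> A. supp f \<inter> {0..<r} \<subseteq> S}"

definition rslope :: "(real \<Rightarrow> real) \<Rightarrow> real \<Rightarrow> real" where
  "rslope g a = (THE D. (g has_real_derivative D) (at a within {a<..}))"

definition lslope :: "(real \<Rightarrow> real) \<Rightarrow> real \<Rightarrow> real" where
  "lslope g b = (THE D. (g has_real_derivative D) (at b within {..<b}))"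

end

theory Submission
  imports Defs
begin

text \<open>
  Every element of \<open>F\<close> is a strictly increasing piecewise affine homeomorphism of
  \<open>[0,r)\<close> with slopes in \<open>\<Lambda>\<close>.  Near \<open>\<alpha>\<close> (from the right) and near \<open>\<beta>\<close> (from the left)
  each \<open>y \<in> F_I\<close> is affine and fixes the endpoint, so the one-sided slope there lies in \<open>\<Lambda>\<close>
  and is multiplicative under composition: both maps are homomorphisms.

  For injectivity on the centralizer \<open>C\<close> of \<open>x\<close>, take \<open>y, z \<in> C\<close> with equal slope at \<open>\<alpha>\<close> and
  show by "real induction" that they agree on \<open>[\<alpha>,\<beta>)\<close>: if they agree left of a point \<open>s\<close>, they
  agree slightly right of \<open>s\<close>.  At \<open>s = \<alpha>\<close> this is the equal-slope hypothesis; if \<open>x s \<noteq> s\<close>,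
  commutation with the monotone bijection \<open>x\<close> transports the agreement across \<open>s\<close>; if \<open>x s = s\<close>
  with \<open>s\<close> interior, then \<open>s \<notin> A\<close>, so \<open>s\<close> is not a breakpoint of \<open>y\<close> or \<open>z\<close> and affine
  rigidity extends the agreement.  The case of \<open>\<beta>\<close> is the mirror image.
\<close>

lemma rslope_affine:
  fixes f :: "real \<Rightarrow> real"
  assumes "t < b" and "\<forall>s\<in>{t..<b}. f s = l * s + c"
  shows "rslope f t = l"
proof -
  have ev: "eventually (\<lambda>s. f s = l * s + c) (at t within {t<..})"
    using eventually_at_right_real[OF assms(1)] assms(2) by (auto elim: eventually_mono)
  have "((\<lambda>s. l * s + c) has_real_derivative l) (at t within {t<..})"
    by (auto intro!: derivative_eq_intros)
  hence deriv: "(f has_real_derivative l) (at t within {t<..})"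
    using has_field_derivative_cong_eventually[OF ev] assms by auto
  show ?thesis
    unfolding rslope_def
  proof (rule the_equality)
    fix D assume "(f has_real_derivative D) (at t within {t<..})"
    thus "D = l" using deriv has_field_derivative_unique trivial_limit_at_right_real by blast
  qed (rule deriv)
qed

lemma lslope_affine:
  fixes f :: "real \<Rightarrow> real"
  assumes "a < t" and "\<forall>s\<in>{a..t}. f s = l * s + c"
  shows "lslope f t = l"
proof -
  have ev: "eventually (\<lambda>s. f s = l * s + c) (at t within {..<t})"
    using eventually_at_left_real[OF assms(1)] assms(2) by (auto elim: eventually_mono)
  have "((\<lambda>s. l * s + c) has_real_derivative l) (at t within {..<t})"
    by (auto intro!: derivative_eq_intros)
  hence deriv: "(f has_real_derivative l) (at t within {..<t})"
    using has_field_derivative_cong_eventually[OF ev] assms by auto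
  show ?thesis
    unfolding lslope_def
  proof (rule the_equality)
    fix D assume "(f has_real_derivative D) (at t within {..<t})"
    thus "D = l" using deriv has_field_derivative_unique trivial_limit_at_left_real by blast
  qed (rule deriv)
qed

lemma affine_eq_two_points:
  fixes l1 l2 c1 c2 p q :: real
  assumes "p \<noteq> q" "l1 * p + c1 = l2 * p + c2" "l1 * q + c1 = l2 * q + c2"
  shows "l1 = l2 \<and> c1 = c2"
proof -
  have "(l1 - l2) * (p - q) = 0" using assms(2,3) by (simp add: algebra_simps)
  hence "l1 = l2" using assms(1) by simp
  thus ?thesis using assms(2) by simp
qed

lemma real_induct_right:
  fixes \<alpha> \<beta> :: real
  assumes step: "\<And>s. \<alpha> \<le> s \<Longrightarrow> s < \<beta> \<Longrightarrow> \<forall>t\<in>{\<alpha>..<s}. P t \<Longrightarrow> \<exists>d>s. \<forall>t\<in>{s..<d}. P t"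
  shows "\<forall>t\<in>{\<alpha>..<\<beta>}. P t"
proof (rule ccontr)
  define B where "B = {t\<in>{\<alpha>..<\<beta>}. \<not> P t}"
  assume "\<not> ?thesis"
  then obtain b where b: "b \<in> B" unfolding B_def by blast
  have bdd: "bdd_below B" unfolding B_def by (auto intro: bdd_belowI[of _ \<alpha>])
  define s where "s = Inf B"
  have "\<alpha> \<le> s" "s \<le> b" unfolding s_def
    using b bdd by (auto intro: cInf_greatest cInf_lower simp: B_def)
  moreover have "s < \<beta>" using \<open>s \<le> b\<close> b by (auto simp: B_def)
  moreover have "\<forall>t\<in>{\<alpha>..<s}. P t"
  proof
    fix t assume t: "t \<in> {\<alpha>..<s}"
    show "P t"
    proof (rule ccontr)
      assume "\<not> P t"
      hence "t \<in> B" using t \<open>s < \<beta>\<close> by (auto simp: B_def)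
      thus False using cInf_lower[OF _ bdd] t unfolding s_def by fastforce
    qed
  qed
  ultimately obtain d where "d > s" and d: "\<forall>t\<in>{s..<d}. P t" using step by blast
  have "d \<le> Inf B"
  proof (rule cInf_greatest)
    show "B \<noteq> {}" using b by blast
    fix t assume "t \<in> B"
    hence "s \<le> t" "\<not> P t" using cInf_lower[OF _ bdd] unfolding s_def B_def by auto
    thus "d \<le> t" using d by (meson atLeastLessThan_iff not_le)
  qed
  thus False using \<open>d > s\<close> unfolding s_def by simp
qed

lemma real_induct_left:
  fixes \<alpha> \<beta> :: real
  assumes step: "\<And>s. \<alpha> < s \<Longrightarrow> s \<le> \<beta> \<Longrightarrow> \<forall>t\<in>{s<..\<beta>}. P t \<Longrightarrow> \<exists>d<s. \<forall>t\<in>{d<..s}. P t"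
  shows "\<forall>t\<in>{\<alpha><..\<beta>}. P t"
proof (rule ccontr)
  define B where "B = {t\<in>{\<alpha><..\<beta>}. \<not> P t}"
  assume "\<not> ?thesis"
  then obtain b where b: "b \<in> B" unfolding B_def by blast
  have bdd: "bdd_above B" unfolding B_def by (auto intro: bdd_aboveI[of _ \<beta>])
  define s where "s = Sup B"
  have "s \<le> \<beta>" "b \<le> s" unfolding s_def
    using b bdd by (auto intro: cSup_least cSup_upper simp: B_def)
  moreover have "\<alpha> < s" using \<open>b \<le> s\<close> b by (auto simp: B_def)
  moreover have "\<forall>t\<in>{s<..\<beta>}. P t"
  proof
    fix t assume t: "t \<in> {s<..\<beta>}"
    show "P t"
    proof (rule ccontr)
      assume "\<not> P t"
      hence "t \<in> B" using t \<open>\<alpha> < s\<close> by (auto simp: B_def)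
      thus False using cSup_upper[OF _ bdd] t unfolding s_def by fastforce
    qed
  qed
  ultimately obtain d where "d < s" and d: "\<forall>t\<in>{d<..s}. P t" using step by blast
  have "Sup B \<le> d"
  proof (rule cSup_least)
    show "B \<noteq> {}" using b by blast
    fix t assume "t \<in> B"
    hence "t \<le> s" "\<not> P t" using cSup_upper[OF _ bdd] unfolding s_def B_def by auto
    thus "t \<le> d" using d by (meson greaterThanAtMost_iff not_le)
  qed
  thus False using \<open>d < s\<close> unfolding s_def by simp
qed

lemma PL_F_basic:
  assumes "f \<in> PL_F r \<Lambda> A"
  shows PL_F_ident_outside: "\<And>t. t \<notin> {0..<r} \<Longrightarrow> f t = t"
    and PL_F_continuous: "continuous_on {0..<r} f"
    and PL_F_onto: "f ` {0..<r} = {0..<r}"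
    and PL_F_inj: "inj_on f {0..<r}"
proof -
  from assms obtain g where h: "homeomorphism {0..<r} {0..<r} f g" unfolding PL_F_def by blast
  show "\<And>t. t \<notin> {0..<r} \<Longrightarrow> f t = t" using assms unfolding PL_F_def by blast
  show "continuous_on {0..<r} f" "f ` {0..<r} = {0..<r}" using h unfolding homeomorphism_def by auto
  show "inj_on f {0..<r}" using h unfolding homeomorphism_def by (metis inj_on_inverseI)
qed

text \<open>A homeomorphism of \<open>[0,r)\<close> fixes the endpoint \<open>0\<close>: a continuous injection on an
  interval cannot attain its minimum at an interior point.\<close>
lemma PL_F_fixes_zero:
  assumes f: "f \<in> PL_F r \<Lambda> A" and r: "0 < r"
  shows "f 0 = 0"
proof -
  obtain u where u: "u \<in> {0..<r}" "f u = 0"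
    using PL_F_onto[OF f] r by (metis atLeastLessThan_iff imageE order.refl)
  have "u = 0"
  proof (rule ccontr)
    assume "u \<noteq> 0"
    define p where "p = (u + r) / 2"
    have "0 < u" "u < p" "p < r" using u \<open>u \<noteq> 0\<close> by (auto simp: p_def)
    moreover have "continuous_on {0..p} f" "inj_on f {0..p}"
      using PL_F_continuous[OF f] PL_F_inj[OF f] \<open>p < r\<close>
      by (auto elim!: continuous_on_subset inj_on_subset)
    ultimately have "f 0 < f u \<or> f p < f u"
      using continuous_inj_imp_mono[of 0 u p f] by auto
    moreover have "f 0 \<ge> 0" "f p \<ge> 0"
      using PL_F_onto[OF f] r \<open>0 < u\<close> \<open>u < p\<close> \<open>p < r\<close> by auto
    ultimately show False using u by auto
  qed
  thus ?thesis using u by simp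
qed

lemma PL_F_strict_mono:
  assumes f: "f \<in> PL_F r \<Lambda> A"
  shows "strict_mono_on {0..<r} f"
proof (rule strict_mono_onI)
  fix a b assume a: "a \<in> {0..<r}" and b: "b \<in> {0..<r}" and "a < b"
  have f0: "f 0 = 0" using PL_F_fixes_zero[OF f] a by auto
  have fb: "f b \<ge> 0" "f b \<noteq> 0"
    using PL_F_onto[OF f] PL_F_inj[OF f] b a \<open>a < b\<close> f0
    by (auto dest: inj_onD[of f _ 0 b])
  show "f a < f b"
  proof (cases "a = 0")
    case True thus ?thesis using f0 fb by simp
  next
    case False
    have "continuous_on {0..b} f" "inj_on f {0..b}"
      using PL_F_continuous[OF f] PL_F_inj[OF f] b
      by (auto elim!: continuous_on_subset inj_on_subset)
    hence "(f 0 < f a \<and> f a < f b) \<or> (f b < f a \<and> f a < f 0)"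
      using continuous_inj_imp_mono[of 0 a b f] a False \<open>a < b\<close> by auto
    thus ?thesis using f0 fb by auto
  qed
qed

lemma PL_F_image_intervals:
  assumes f: "f \<in> PL_F r \<Lambda> A" and s: "0 \<le> s" "s < r"
  shows PL_F_image_below: "f ` {0..<s} = {0..<f s}"
    and PL_F_image_above: "f ` {s<..<r} = {f s<..<r}"
proof -
  have less: "f u < f v \<longleftrightarrow> u < v" if "u \<in> {0..<r}" "v \<in> {0..<r}" for u v
    using strict_mono_on_less[OF PL_F_strict_mono[OF f] that] .
  have in_range: "f v \<in> {0..<r}" if "v \<in> {0..<r}" for v
    using PL_F_onto[OF f] that by blast
  have preimage: "\<exists>v\<in>{0..<r}. t = f v" if "t \<in> {0..<r}" for t
    using that PL_F_onto[OF f] by (metis imageE)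
  have s_in: "s \<in> {0..<r}" using s by simp
  note fs = in_range[OF s_in]
  show "f ` {0..<s} = {0..<f s}"
  proof (intro set_eqI iffI)
    fix t assume "t \<in> f ` {0..<s}"
    then obtain v where v: "v \<in> {0..<s}" "t = f v" by blast
    hence "v \<in> {0..<r}" using s by simp
    thus "t \<in> {0..<f s}" using v less[OF _ s_in] in_range by simp
  next
    fix t assume t: "t \<in> {0..<f s}"
    hence "t \<in> {0..<r}" using fs by simp
    then obtain v where v: "v \<in> {0..<r}" "t = f v" using preimage by blast
    thus "t \<in> f ` {0..<s}" using t less[OF _ s_in] by simp
  qed
  show "f ` {s<..<r} = {f s<..<r}"
  proof (intro set_eqI iffI)
    fix t assume "t \<in> f ` {s<..<r}"
    then obtain v where v: "v \<in> {s<..<r}" "t = f v" by blast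
    hence "v \<in> {0..<r}" using s by simp
    thus "t \<in> {f s<..<r}" using v less[OF s_in] in_range by simp
  next
    fix t assume t: "t \<in> {f s<..<r}"
    hence "t \<in> {0..<r}" using fs by simp
    then obtain v where v: "v \<in> {0..<r}" "t = f v" using preimage by blast
    thus "t \<in> f ` {s<..<r}" using t less[OF s_in] by simp
  qed
qed

lemma sorted_piece_right:
  fixes ps :: "real list"
  assumes "sorted_wrt (<) ps" "ps \<noteq> []" "hd ps \<le> t" "t < last ps"
  shows "\<exists>i < length ps - 1. ps!i \<le> t \<and> t < ps!(Suc i)"
  using assms
proof (induction ps)
  case Nil then show ?case by simp
next
  case (Cons x xs)
  show ?case
  proof (cases "xs = []")
    case True then show ?thesis using Cons by simp
  next
    case False
    show ?thesis
    proof (cases "t < hd xs")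
      case True
      then show ?thesis using Cons False by (auto simp: hd_conv_nth intro!: exI[of _ 0])
    next
      case nt: False
      have "\<exists>i < length xs - 1. xs!i \<le> t \<and> t < xs!(Suc i)"
        using Cons.IH Cons.prems False nt by auto
      then obtain i where "i < length xs - 1" "xs!i \<le> t" "t < xs!(Suc i)" by blast
      then show ?thesis by (auto intro!: exI[of _ "Suc i"])
    qed
  qed
qed

lemma sorted_piece_left:
  fixes ps :: "real list"
  assumes "sorted_wrt (<) ps" "ps \<noteq> []" "hd ps < t" "t \<le> last ps"
  shows "\<exists>i < length ps - 1. ps!i < t \<and> t \<le> ps!(Suc i)"
  using assms
proof (induction ps)
  case Nil then show ?case by simp
next
  case (Cons x xs)
  show ?case
  proof (cases "xs = []")
    case True then show ?thesis using Cons by simp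
  next
    case False
    show ?thesis
    proof (cases "t \<le> hd xs")
      case True
      then show ?thesis using Cons False by (auto simp: hd_conv_nth intro!: exI[of _ 0])
    next
      case nt: False
      have "\<exists>i < length xs - 1. xs!i < t \<and> t \<le> xs!(Suc i)"
        using Cons.IH Cons.prems False nt by auto
      then obtain i where "i < length xs - 1" "xs!i < t" "t \<le> xs!(Suc i)" by blast
      then show ?thesis by (auto intro!: exI[of _ "Suc i"])
    qed
  qed
qed

lemma PL_F_piece_right:
  assumes "f \<in> PL_F r \<Lambda> A" "0 \<le> t" "t < r"
  shows "\<exists>a b l c. a \<le> t \<and> t < b \<and> a \<in> A \<and> l \<in> \<Lambda> \<and> (\<forall>s\<in>{a..<b}. f s = l * s + c)"
proof -
  from assms(1) obtain ps :: "real list" where ps: "ps \<noteq> []" "sorted_wrt (<) ps" "hd ps = 0"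
      "last ps = r" "set ps \<subseteq> A"
    and pieces: "\<forall>i < length ps - 1. \<exists>l\<in>\<Lambda>. \<exists>c. \<forall>t\<in>{ps!i..<ps!(i+1)}. f t = l * t + c"
    unfolding PL_F_def by blast
  obtain i where i: "i < length ps - 1" "ps!i \<le> t" "t < ps!(Suc i)"
    using sorted_piece_right[OF ps(2,1)] ps assms by auto
  from pieces i(1) obtain l c where "l \<in> \<Lambda>" "\<forall>s\<in>{ps!i..<ps!(i+1)}. f s = l * s + c" by meson
  moreover have "ps!i \<in> A" using ps(5) i(1) by auto
  ultimately show ?thesis using i by auto
qed

lemma PL_F_piece_left_open:
  assumes "f \<in> PL_F r \<Lambda> A" "0 < t" "t \<le> r"
  shows "\<exists>a l c. 0 \<le> a \<and> a < t \<and> l \<in> \<Lambda> \<and> (\<forall>s\<in>{a..<t}. f s = l * s + c)"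
proof -
  from assms(1) obtain ps :: "real list" where ps: "ps \<noteq> []" "sorted_wrt (<) ps" "hd ps = 0"
      "last ps = r"
    and pieces: "\<forall>i < length ps - 1. \<exists>l\<in>\<Lambda>. \<exists>c. \<forall>t\<in>{ps!i..<ps!(i+1)}. f t = l * t + c"
    unfolding PL_F_def by blast
  obtain i where i: "i < length ps - 1" "ps!i < t" "t \<le> ps!(Suc i)"
    using sorted_piece_left[OF ps(2,1)] ps assms by auto
  from pieces i(1) obtain l c where "l \<in> \<Lambda>" "\<forall>s\<in>{ps!i..<ps!(i+1)}. f s = l * s + c" by meson
  moreover have "0 \<le> ps!i"
  proof (cases "i = 0")
    case False
    hence "ps!0 < ps!i" using sorted_wrt_nth_less[OF ps(2)] i(1) by auto
    thus ?thesis using ps(1,3) by (simp add: hd_conv_nth)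
  qed (use ps(1,3) in \<open>simp add: hd_conv_nth\<close>)
  ultimately show ?thesis
    using i by (intro exI[of _ "ps!i"] exI[of _ l] exI[of _ c]) auto
qed

lemma continuous_left_value:
  fixes f :: "real \<Rightarrow> real"
  assumes "isCont f t" "a < t" "\<forall>s\<in>{a..<t}. f s = l * s + c"
  shows "f t = l * t + c"
proof -
  have lim_f: "(f \<longlongrightarrow> f t) (at_left t)"
    using assms(1) by (simp add: isCont_def filterlim_at_split)
  have "eventually (\<lambda>s. l * s + c = f s) (at_left t)"
    using eventually_at_left_real[OF assms(2)] assms(3) by (auto elim: eventually_mono)
  moreover have "((\<lambda>s. l * s + c) \<longlongrightarrow> l * t + c) (at_left t)"
    by (intro tendsto_intros)
  ultimately have "(f \<longlongrightarrow> l * t + c) (at_left t)" using tendsto_cong by fastforce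
  thus ?thesis using tendsto_unique[OF trivial_limit_at_left_real lim_f] by simp
qed

text \<open>The last affine piece of an element of \<open>F\<close> tends to \<open>r\<close> at \<open>r\<close>, so the extension to
  \<open>[0,r]\<close> (which fixes \<open>r\<close>) is affine up to and including \<open>r\<close>.\<close>
lemma PL_F_last_piece_value:
  assumes f: "f \<in> PL_F r \<Lambda> A" and a: "0 \<le> a" "a < r" and l: "0 < l"
    and aff: "\<forall>s\<in>{a..<r}. f s = l * s + c"
  shows "l * r + c = r"
proof -
  have in_range: "f s \<in> {0..<r}" if "s \<in> {0..<r}" for s
    using PL_F_onto[OF f] that by blast
  show ?thesis
  proof (cases "l * r + c \<le> r")
    case False
    define s where "s = max a (r - (l * r + c - r) / l)"
    have s: "a \<le> s" "s < r" using a l False by (auto simp: s_def field_simps)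
    have "l * (r - (l * r + c - r) / l) \<le> l * s"
      using l by (intro mult_left_mono) (auto simp: s_def)
    moreover have "l * (r - (l * r + c - r) / l) = r - c" using l by (simp add: field_simps)
    ultimately have "r \<le> l * s + c" by simp
    thus ?thesis using in_range[of s] aff s a by auto
  next
    case True
    show ?thesis
    proof (rule ccontr)
      assume "l * r + c \<noteq> r"
      hence below_r: "l * r + c < r" using True by simp
      have fa: "f a = l * a + c" "0 \<le> f a" using aff in_range[of a] a by auto
      have "l * a < l * r" using a l by simp
      define w where "w = (l * r + c + r) / 2"
      have "w \<in> {0..<r}" using fa below_r \<open>l * a < l * r\<close> by (auto simp: w_def)
      then obtain v where v: "v \<in> {0..<r}" "f v = w"
        using PL_F_onto[OF f] by (metis imageE)
      show False
      proof (cases "a \<le> v")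
        case True
        hence "f v = l * v + c" using aff v by auto
        moreover have "l * v < l * r" using v l by simp
        ultimately show False using v(2) below_r by (simp add: w_def)
      next
        case False
        hence "f v < f a"
          using strict_mono_onD[OF PL_F_strict_mono[OF f]] v a by auto
        thus False using v(2) fa below_r \<open>l * a < l * r\<close> by (simp add: w_def)
      qed
    qed
  qed
qed

lemma PL_F_piece_left:
  assumes f: "f \<in> PL_F r \<Lambda> A" and Lam: "\<Lambda> \<subseteq> {0<..}" and t: "0 < t" "t \<le> r"
  shows "\<exists>a l c. a < t \<and> l \<in> \<Lambda> \<and> (\<forall>s\<in>{a..t}. f s = l * s + c)"
proof -
  obtain a l c where piece: "0 \<le> a" "a < t" "l \<in> \<Lambda>" "\<forall>s\<in>{a..<t}. f s = l * s + c"
    using PL_F_piece_left_open[OF f t] by blast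
  have "f t = l * t + c"
  proof (cases "t = r")
    case True
    have "f r = r" using PL_F_ident_outside[OF f] by simp
    moreover have "l * r + c = r"
      using PL_F_last_piece_value[OF f piece(1)] piece Lam True by auto
    ultimately show ?thesis using True by simp
  next
    case False
    have "continuous_on {0<..<r} f"
      using PL_F_continuous[OF f] by (rule continuous_on_subset) auto
    hence "isCont f t" using t False by (simp add: continuous_on_eq_continuous_at)
    thus ?thesis using continuous_left_value piece by blast
  qed
  thus ?thesis using piece by (intro exI[of _ a] exI[of _ l] exI[of _ c]) auto
qed

lemma PL_F_right_germ:
  assumes f: "f \<in> PL_F r \<Lambda> A" and t: "0 \<le> t" "t < r"
  shows "rslope f t \<in> \<Lambda> \<and> (\<exists>b c. t < b \<and> (\<forall>s\<in>{t..<b}. f s = rslope f t * s + c))"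
proof -
  obtain a b l c where piece: "a \<le> t" "t < b" "l \<in> \<Lambda>" "\<forall>s\<in>{a..<b}. f s = l * s + c"
    using PL_F_piece_right[OF f t] by blast
  hence "rslope f t = l" by (intro rslope_affine[of t b _ _ c]) auto
  thus ?thesis using piece by auto
qed

lemma PL_F_left_germ:
  assumes f: "f \<in> PL_F r \<Lambda> A" and Lam: "\<Lambda> \<subseteq> {0<..}" and t: "0 < t" "t \<le> r"
  shows "lslope f t \<in> \<Lambda> \<and> (\<exists>a c. a < t \<and> (\<forall>s\<in>{a..t}. f s = lslope f t * s + c))"
proof -
  obtain a l c where piece: "a < t" "l \<in> \<Lambda>" "\<forall>s\<in>{a..t}. f s = l * s + c"
    using PL_F_piece_left[OF f Lam t] by blast
  hence "lslope f t = l" by (intro lslope_affine) auto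
  thus ?thesis using piece by auto
qed

text \<open>Chain rule for right slopes at a fixed point of the first map (right action: first \<open>y\<close>, then \<open>z\<close>).\<close>
lemma rslope_comp:
  assumes Lam: "\<Lambda> \<subseteq> {0<..}" and y: "y \<in> PL_F r \<Lambda> A" and z: "z \<in> PL_F r \<Lambda> A"
    and t: "0 \<le> t" "t < r" and fix_t: "y t = t"
  shows "rslope (z \<circ> y) t = rslope y t * rslope z t"
proof -
  define l1 l2 where "l1 = rslope y t" and "l2 = rslope z t"
  obtain b1 c1 where "l1 \<in> \<Lambda>" "t < b1" and y_aff: "\<forall>s\<in>{t..<b1}. y s = l1 * s + c1"
    using PL_F_right_germ[OF y t] unfolding l1_def by blast
  obtain b2 c2 where "t < b2" and z_aff: "\<forall>s\<in>{t..<b2}. z s = l2 * s + c2"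
    using PL_F_right_germ[OF z t] unfolding l2_def by blast
  have "0 < l1" using \<open>l1 \<in> \<Lambda>\<close> Lam by auto
  have c1: "c1 = t - l1 * t" using y_aff fix_t \<open>t < b1\<close> by force
  define b where "b = min b1 (t + (b2 - t) / l1)"
  have "t < b" using \<open>t < b1\<close> \<open>t < b2\<close> \<open>0 < l1\<close> by (auto simp: b_def)
  moreover have "\<forall>s\<in>{t..<b}. (z \<circ> y) s = (l1 * l2) * s + (l2 * c1 + c2)"
  proof
    fix s assume s: "s \<in> {t..<b}"
    have ys: "y s = t + l1 * (s - t)" using y_aff s c1 by (auto simp: b_def algebra_simps)
    have "l1 * (s - t) < b2 - t"
      using s \<open>0 < l1\<close> by (simp add: b_def field_simps)
    moreover have "0 \<le> l1 * (s - t)" using s \<open>0 < l1\<close> by simp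
    ultimately have "y s \<in> {t..<b2}" using ys by simp
    thus "(z \<circ> y) s = (l1 * l2) * s + (l2 * c1 + c2)"
      using z_aff y_aff s by (auto simp: b_def algebra_simps)
  qed
  ultimately show ?thesis unfolding l1_def l2_def by (rule rslope_affine)
qed

lemma lslope_comp:
  assumes Lam: "\<Lambda> \<subseteq> {0<..}" and y: "y \<in> PL_F r \<Lambda> A" and z: "z \<in> PL_F r \<Lambda> A"
    and t: "0 < t" "t \<le> r" and fix_t: "y t = t"
  shows "lslope (z \<circ> y) t = lslope y t * lslope z t"
proof -
  define l1 l2 where "l1 = lslope y t" and "l2 = lslope z t"
  obtain a1 c1 where "l1 \<in> \<Lambda>" "a1 < t" and y_aff: "\<forall>s\<in>{a1..t}. y s = l1 * s + c1"
    using PL_F_left_germ[OF y Lam t] unfolding l1_def by blast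
  obtain a2 c2 where "a2 < t" and z_aff: "\<forall>s\<in>{a2..t}. z s = l2 * s + c2"
    using PL_F_left_germ[OF z Lam t] unfolding l2_def by blast
  have "0 < l1" using \<open>l1 \<in> \<Lambda>\<close> Lam by auto
  have c1: "c1 = t - l1 * t" using y_aff fix_t \<open>a1 < t\<close> by force
  define a where "a = max a1 (t - (t - a2) / l1)"
  have "a < t" using \<open>a1 < t\<close> \<open>a2 < t\<close> \<open>0 < l1\<close> by (auto simp: a_def)
  moreover have "\<forall>s\<in>{a..t}. (z \<circ> y) s = (l1 * l2) * s + (l2 * c1 + c2)"
  proof
    fix s assume s: "s \<in> {a..t}"
    have ys: "y s = t - l1 * (t - s)" using y_aff s c1 by (auto simp: a_def algebra_simps)
    have "l1 * (t - s) \<le> t - a2"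
      using s \<open>0 < l1\<close> by (simp add: a_def field_simps)
    moreover have "0 \<le> l1 * (t - s)" using s \<open>0 < l1\<close> by simp
    ultimately have "y s \<in> {a2..t}" using ys by simp
    thus "(z \<circ> y) s = (l1 * l2) * s + (l2 * c1 + c2)"
      using z_aff y_aff s by (auto simp: a_def algebra_simps)
  qed
  ultimately show ?thesis unfolding l1_def l2_def by (rule lslope_affine)
qed

lemma rslope_determines_germ:
  assumes f: "f \<in> PL_F r \<Lambda> A" and g: "g \<in> PL_F r \<Lambda> A" and t: "0 \<le> t" "t < r"
    and "f t = g t" and "rslope f t = rslope g t"
  shows "\<exists>d>t. \<forall>s\<in>{t..<d}. f s = g s"
proof -
  obtain b1 c1 where "t < b1" and f_aff: "\<forall>s\<in>{t..<b1}. f s = rslope f t * s + c1"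
    using PL_F_right_germ[OF f t] by blast
  obtain b2 c2 where "t < b2" and g_aff: "\<forall>s\<in>{t..<b2}. g s = rslope g t * s + c2"
    using PL_F_right_germ[OF g t] by blast
  have "c1 = c2" using f_aff g_aff assms(5,6) \<open>t < b1\<close> \<open>t < b2\<close> by force
  thus ?thesis using f_aff g_aff assms(6) \<open>t < b1\<close> \<open>t < b2\<close>
    by (intro exI[of _ "min b1 b2"]) auto
qed

lemma lslope_determines_germ:
  assumes f: "f \<in> PL_F r \<Lambda> A" and g: "g \<in> PL_F r \<Lambda> A" and Lam: "\<Lambda> \<subseteq> {0<..}"
    and t: "0 < t" "t \<le> r" and "f t = g t" and "lslope f t = lslope g t"
  shows "\<exists>d<t. \<forall>s\<in>{d<..t}. f s = g s"
proof -
  obtain a1 c1 where "a1 < t" and f_aff: "\<forall>s\<in>{a1..t}. f s = lslope f t * s + c1"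
    using PL_F_left_germ[OF f Lam t] by blast
  obtain a2 c2 where "a2 < t" and g_aff: "\<forall>s\<in>{a2..t}. g s = lslope g t * s + c2"
    using PL_F_left_germ[OF g Lam t] by blast
  have "c1 = c2" using f_aff g_aff assms(6,7) \<open>a1 < t\<close> \<open>a2 < t\<close> by force
  thus ?thesis using f_aff g_aff assms(7) \<open>a1 < t\<close> \<open>a2 < t\<close>
    by (intro exI[of _ "max a1 a2"]) auto
qed

text \<open>Around a point outside \<open>A\<close> (hence not a breakpoint) two elements of \<open>F\<close> are both affine;
  if they agree at two points of that neighbourhood, they agree on all of it.\<close>
lemma PL_F_rigid_at_nonbreak:
  assumes f: "f \<in> PL_F r \<Lambda> A" and g: "g \<in> PL_F r \<Lambda> A" and t: "0 \<le> t" "t < r" "t \<notin> A"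
  shows "\<exists>a b. a < t \<and> t < b \<and> (\<forall>p q. a \<le> p \<longrightarrow> p < q \<longrightarrow> q < b \<longrightarrow>
           f p = g p \<longrightarrow> f q = g q \<longrightarrow> (\<forall>s\<in>{a..<b}. f s = g s))"
proof -
  obtain a1 b1 l1 c1 where p1: "a1 \<le> t" "t < b1" "a1 \<in> A" "\<forall>s\<in>{a1..<b1}. f s = l1 * s + c1"
    using PL_F_piece_right[OF f t(1,2)] by blast
  obtain a2 b2 l2 c2 where p2: "a2 \<le> t" "t < b2" "a2 \<in> A" "\<forall>s\<in>{a2..<b2}. g s = l2 * s + c2"
    using PL_F_piece_right[OF g t(1,2)] by blast
  have "a1 \<noteq> t" using p1(3) t(3) by blast
  have "a2 \<noteq> t" using p2(3) t(3) by blast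
  have rigid: "\<forall>s\<in>{max a1 a2..<min b1 b2}. f s = g s"
    if "max a1 a2 \<le> p" "p < q" "q < min b1 b2" "f p = g p" "f q = g q" for p q
  proof -
    have "p \<in> {a1..<b1}" "q \<in> {a1..<b1}" "p \<in> {a2..<b2}" "q \<in> {a2..<b2}"
      using that(1-3) by simp_all
    hence "l1 * p + c1 = l2 * p + c2" "l1 * q + c1 = l2 * q + c2"
      using that(4,5) p1(4) p2(4) by metis+
    hence same: "l1 = l2 \<and> c1 = c2"
      by (rule affine_eq_two_points[OF less_imp_neq[OF \<open>p < q\<close>]])
    show ?thesis
    proof
      fix s assume "s \<in> {max a1 a2..<min b1 b2}"
      hence "s \<in> {a1..<b1}" "s \<in> {a2..<b2}" by simp_all
      thus "f s = g s" using p1(4) p2(4) same by simp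
    qed
  qed
  moreover have "max a1 a2 < t" "t < min b1 b2" using p1 p2 \<open>a1 \<noteq> t\<close> \<open>a2 \<noteq> t\<close> by auto
  ultimately show ?thesis by (intro exI[of _ "max a1 a2"] exI[of _ "min b1 b2"]) simp
qed

lemma nonbreak_extend_right:
  assumes f: "f \<in> PL_F r \<Lambda> A" and g: "g \<in> PL_F r \<Lambda> A" and t: "0 \<le> t" "t < r" "t \<notin> A"
    and "p < t" and agree: "\<forall>s\<in>{p..<t}. f s = g s"
  shows "\<exists>d>t. \<forall>s\<in>{t..<d}. f s = g s"
proof -
  obtain a b where ab: "a < t" "t < b"
    and rigid: "\<And>p q. a \<le> p \<Longrightarrow> p < q \<Longrightarrow> q < b \<Longrightarrow> f p = g p \<Longrightarrow> f q = g q \<Longrightarrow>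
                  \<forall>s\<in>{a..<b}. f s = g s"
    using PL_F_rigid_at_nonbreak[OF f g t] by blast
  define p1 where "p1 = (max a p + t) / 2"
  define p2 where "p2 = (p1 + t) / 2"
  have "max a p < p1" "p1 < p2" "p2 < t" using ab \<open>p < t\<close> by (auto simp: p1_def p2_def)
  hence "\<forall>s\<in>{a..<b}. f s = g s" using rigid[of p1 p2] agree ab by auto
  thus ?thesis using ab by auto
qed

lemma nonbreak_extend_left:
  assumes f: "f \<in> PL_F r \<Lambda> A" and g: "g \<in> PL_F r \<Lambda> A" and t: "0 \<le> t" "t < r" "t \<notin> A"
    and "t < q" and agree: "\<forall>s\<in>{t<..q}. f s = g s"
  shows "\<exists>d<t. \<forall>s\<in>{d<..t}. f s = g s"
proof -
  obtain a b where ab: "a < t" "t < b"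
    and rigid: "\<And>p q. a \<le> p \<Longrightarrow> p < q \<Longrightarrow> q < b \<Longrightarrow> f p = g p \<Longrightarrow> f q = g q \<Longrightarrow>
                  \<forall>s\<in>{a..<b}. f s = g s"
    using PL_F_rigid_at_nonbreak[OF f g t] by blast
  define q1 where "q1 = (min b q + t) / 2"
  define q2 where "q2 = (q1 + t) / 2"
  have "t < q2" "q2 < q1" "q1 < min b q" using ab \<open>t < q\<close> by (auto simp: q1_def q2_def)
  hence "\<forall>s\<in>{a..<b}. f s = g s" using rigid[of q2 q1] agree ab by auto
  thus ?thesis using ab by auto
qed

lemma commuting_agree_image:
  assumes "y \<circ> x = x \<circ> y" and "z \<circ> x = x \<circ> z" and "y v = z v"
  shows "y (x v) = z (x v)"
  using assms by (metis comp_apply)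

lemma commuting_agree_preimage:
  assumes "y \<circ> x = x \<circ> y" and "z \<circ> x = x \<circ> z" and "inj_on x S"
    and "y t \<in> S" "z t \<in> S" and "y (x t) = z (x t)"
  shows "y t = z t"
  using assms by (metis comp_apply inj_onD)

text \<open>If \<open>x s \<noteq> s\<close>, agreement of \<open>y, z \<in> C(x)\<close> on \<open>[0,s)\<close> is transported past \<open>s\<close>: through
  \<open>x\<close> itself when \<open>x\<close> moves \<open>s\<close> up, through the preimage of \<open>[0,s)\<close> when it moves \<open>s\<close> down.\<close>
lemma commuting_extend_right:
  assumes x: "x \<in> PL_F r \<Lambda> A" and y: "y \<in> PL_F r \<Lambda> A" and z: "z \<in> PL_F r \<Lambda> A"
    and yx: "y \<circ> x = x \<circ> y" and zx: "z \<circ> x = x \<circ> z"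
    and s: "0 \<le> s" "s < r" "x s \<noteq> s" and below: "\<forall>t\<in>{0..<s}. y t = z t"
  shows "\<exists>d>s. \<forall>t\<in>{s..<d}. y t = z t"
proof (cases "s < x s")
  case True
  have "\<forall>t\<in>x ` {0..<s}. y t = z t" using below commuting_agree_image[OF yx zx] by blast
  thus ?thesis using True PL_F_image_below[OF x s(1,2)] s(1)
    by (intro exI[of _ "x s"]) auto
next
  case False
  obtain u where u: "u \<in> {0..<r}" "x u = s"
    using PL_F_onto[OF x] s(1,2) by (metis atLeastLessThan_iff imageE)
  have "x s < x u" using False s(3) u(2) by simp
  hence "s < u" using strict_mono_on_less[OF PL_F_strict_mono[OF x]] u(1) s(1,2) by simp
  have "y t = z t" if t: "t \<in> {s..<u}" for t
  proof (rule commuting_agree_preimage[OF yx zx PL_F_inj[OF x]])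
    have "t \<in> {0..<r}" using t s(1) u(1) by auto
    thus "y t \<in> {0..<r}" "z t \<in> {0..<r}" using PL_F_onto[OF y] PL_F_onto[OF z] by blast+
    have "x t \<in> {0..<s}" using PL_F_image_below[of x r \<Lambda> A u] x u t s(1) by auto
    thus "y (x t) = z (x t)" using below by blast
  qed
  thus ?thesis using \<open>s < u\<close> by blast
qed

lemma commuting_extend_left:
  assumes x: "x \<in> PL_F r \<Lambda> A" and y: "y \<in> PL_F r \<Lambda> A" and z: "z \<in> PL_F r \<Lambda> A"
    and yx: "y \<circ> x = x \<circ> y" and zx: "z \<circ> x = x \<circ> z"
    and s: "0 \<le> s" "s < r" "x s \<noteq> s" and above: "\<forall>t\<in>{s<..<r}. y t = z t"
  shows "\<exists>d<s. \<forall>t\<in>{d<..s}. y t = z t"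
proof (cases "x s < s")
  case True
  have "\<forall>t\<in>x ` {s<..<r}. y t = z t" using above commuting_agree_image[OF yx zx] by blast
  thus ?thesis using True PL_F_image_above[OF x s(1,2)] s(2)
    by (intro exI[of _ "x s"]) auto
next
  case False
  obtain u where u: "u \<in> {0..<r}" "x u = s"
    using PL_F_onto[OF x] s(1,2) by (metis atLeastLessThan_iff imageE)
  have "x u < x s" using False s(3) u(2) by simp
  hence "u < s" using strict_mono_on_less[OF PL_F_strict_mono[OF x]] u(1) s(1,2) by simp
  have "y t = z t" if t: "t \<in> {u<..s}" for t
  proof (rule commuting_agree_preimage[OF yx zx PL_F_inj[OF x]])
    have "t \<in> {0..<r}" using t s(2) u(1) by auto
    thus "y t \<in> {0..<r}" "z t \<in> {0..<r}" using PL_F_onto[OF y] PL_F_onto[OF z] by blast+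
    have "x t \<in> {s<..<r}" using PL_F_image_above[of x r \<Lambda> A u] x u t s(2) by auto
    thus "y (x t) = z (x t)" using above by blast
  qed
  thus ?thesis using \<open>u < s\<close> by blast
qed



lemma PL_F_on_PL_F: "f \<in> PL_F_on r \<Lambda> A S \<Longrightarrow> f \<in> PL_F r \<Lambda> A"
  unfolding PL_F_on_def by blast

lemma PL_F_on_ident_outside: "f \<in> PL_F_on r \<Lambda> A S \<Longrightarrow> t \<notin> S \<Longrightarrow> f t = t"
  unfolding PL_F_on_def supp_def using PL_F_ident_outside[of f r \<Lambda> A] by blast

lemma centralizer_rslope_inj:
  assumes I: "0 \<le> \<alpha>" "\<alpha> < \<beta>" "\<beta> \<le> r"
    and x: "x \<in> PL_F_on r \<Lambda> A {\<alpha><..<\<beta>}" and x_fix: "fixset x \<inter> {\<alpha><..<\<beta>} \<inter> A = {}"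
    and y: "y \<in> PL_F_on r \<Lambda> A {\<alpha><..<\<beta>}" and z: "z \<in> PL_F_on r \<Lambda> A {\<alpha><..<\<beta>}"
    and yx: "y \<circ> x = x \<circ> y" and zx: "z \<circ> x = x \<circ> z"
    and slope: "rslope y \<alpha> = rslope z \<alpha>"
  shows "y = z"
proof -
  note xF = PL_F_on_PL_F[OF x] and yF = PL_F_on_PL_F[OF y] and zF = PL_F_on_PL_F[OF z]
  have outside: "y t = z t" if "t \<notin> {\<alpha><..<\<beta>}" for t
    using PL_F_on_ident_outside[OF y that] PL_F_on_ident_outside[OF z that] by simp
  have "\<forall>t\<in>{\<alpha>..<\<beta>}. y t = z t"
  proof (rule real_induct_right)
    fix s assume s: "\<alpha> \<le> s" "s < \<beta>" and IH: "\<forall>t\<in>{\<alpha>..<s}. y t = z t"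
    have s_range: "0 \<le> s" "s < r" using s I by auto
    have below: "\<forall>t\<in>{0..<s}. y t = z t" using IH outside by fastforce
    consider "x s \<noteq> s" | "x s = s" "s = \<alpha>" | "x s = s" "\<alpha> < s" using s by fastforce
    then show "\<exists>d>s. \<forall>t\<in>{s..<d}. y t = z t"
    proof cases
      case 1
      show ?thesis by (rule commuting_extend_right[OF xF yF zF yx zx s_range 1 below])
    next
      case 2
      have "y s = z s" using outside 2 by simp
      thus ?thesis using rslope_determines_germ[OF yF zF s_range] slope 2 by simp
    next
      case 3
      have "s \<notin> A" using x_fix 3 s unfolding fixset_def by auto
      thus ?thesis using nonbreak_extend_right[OF yF zF s_range _ \<open>\<alpha> < s\<close>] IH by blast
    qed
  qed
  thus "y = z" using outside by fastforce
qed

lemma centralizer_lslope_inj: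
  assumes Lam: "\<Lambda> \<subseteq> {0<..}" and I: "0 \<le> \<alpha>" "\<alpha> < \<beta>" "\<beta> \<le> r"
    and x: "x \<in> PL_F_on r \<Lambda> A {\<alpha><..<\<beta>}" and x_fix: "fixset x \<inter> {\<alpha><..<\<beta>} \<inter> A = {}"
    and y: "y \<in> PL_F_on r \<Lambda> A {\<alpha><..<\<beta>}" and z: "z \<in> PL_F_on r \<Lambda> A {\<alpha><..<\<beta>}"
    and yx: "y \<circ> x = x \<circ> y" and zx: "z \<circ> x = x \<circ> z"
    and slope: "lslope y \<beta> = lslope z \<beta>"
  shows "y = z"
proof -
  note xF = PL_F_on_PL_F[OF x] and yF = PL_F_on_PL_F[OF y] and zF = PL_F_on_PL_F[OF z]
  have outside: "y t = z t" if "t \<notin> {\<alpha><..<\<beta>}" for t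
    using PL_F_on_ident_outside[OF y that] PL_F_on_ident_outside[OF z that] by simp
  have "\<forall>t\<in>{\<alpha><..\<beta>}. y t = z t"
  proof (rule real_induct_left)
    fix s assume s: "\<alpha> < s" "s \<le> \<beta>" and IH: "\<forall>t\<in>{s<..\<beta>}. y t = z t"
    have above: "\<forall>t\<in>{s<..<r}. y t = z t" using IH outside by fastforce
    consider "x s \<noteq> s" | "x s = s" "s = \<beta>" | "x s = s" "s < \<beta>" using s by fastforce
    then show "\<exists>d<s. \<forall>t\<in>{d<..s}. y t = z t"
    proof cases
      case 1
      have "s \<noteq> r" using PL_F_ident_outside[OF xF, of s] 1 by auto
      hence s_range: "0 \<le> s" "s < r" using s I by auto
      show ?thesis by (rule commuting_extend_left[OF xF yF zF yx zx s_range 1 above])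
    next
      case 2
      have "y s = z s" using outside 2 by simp
      thus ?thesis using lslope_determines_germ[OF yF zF Lam] slope 2 I by simp
    next
      case 3
      have s_range: "0 \<le> s" "s < r" using s 3 I by auto
      have "s \<notin> A" using x_fix 3 s unfolding fixset_def by auto
      thus ?thesis using nonbreak_extend_left[OF yF zF s_range _ \<open>s < \<beta>\<close>] IH by blast
    qed
  qed
  thus "y = z" using outside by fastforce
qed

theorem lemma4p1:
  fixes r \<alpha> \<beta> :: real and \<Lambda> A :: "real set" and x :: "real \<Rightarrow> real"
  assumes r_pos: "r > 0"
    and Lam_pos: "\<Lambda> \<subseteq> {0<..}"
    and Lam_one: "1 \<in> \<Lambda>"
    and Lam_mult: "\<And>a b. a \<in> \<Lambda> \<Longrightarrow> b \<in> \<Lambda> \<Longrightarrow> a * b \<in> \<Lambda>"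
    and Lam_inv: "\<And>a. a \<in> \<Lambda> \<Longrightarrow> inverse a \<in> \<Lambda>"
    and Lam_nontriv: "\<Lambda> \<noteq> {1}"
    and A_zero: "0 \<in> A"
    and A_add: "\<And>a b. a \<in> A \<Longrightarrow> b \<in> A \<Longrightarrow> a + b \<in> A"
    and A_neg: "\<And>a. a \<in> A \<Longrightarrow> - a \<in> A"
    and r_A: "r \<in> A"
    and A_Lam: "\<And>l a. l \<in> \<Lambda> \<Longrightarrow> a \<in> A \<Longrightarrow> l * a \<in> A"
    and \<alpha>_mem: "\<alpha> \<in> {0..r} \<inter> A"
    and \<beta>_mem: "\<beta> \<in> {0..r} \<inter> A"
    and \<alpha>\<beta>: "\<alpha> < \<beta>"
    and x_mem: "x \<in> PL_F_on r \<Lambda> A {\<alpha><..<\<beta>}"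
    and x_fix: "fixset x \<inter> {\<alpha><..<\<beta>} \<inter> A = {}"
  defines "FI \<equiv> PL_F_on r \<Lambda> A {\<alpha><..<\<beta>}"
    and "C \<equiv> {y \<in> PL_F_on r \<Lambda> A {\<alpha><..<\<beta>}. y \<circ> x = x \<circ> y}"
  shows "(\<forall>y\<in>FI. rslope y \<alpha> \<in> \<Lambda>) \<and>
         (\<forall>y\<in>FI. \<forall>z\<in>FI. rslope (z \<circ> y) \<alpha> = rslope y \<alpha> * rslope z \<alpha>) \<and>
         inj_on (\<lambda>y. rslope y \<alpha>) C \<and>
         (\<forall>y\<in>FI. lslope y \<beta> \<in> \<Lambda>) \<and>
         (\<forall>y\<in>FI. \<forall>z\<in>FI. lslope (z \<circ> y) \<beta> = lslope y \<beta> * lslope z \<beta>) \<and>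
         inj_on (\<lambda>y. lslope y \<beta>) C"
proof -
  have I: "0 \<le> \<alpha>" "\<alpha> < \<beta>" "\<beta> \<le> r" using \<alpha>_mem \<beta>_mem \<alpha>\<beta> by auto
  hence \<alpha>_range: "0 \<le> \<alpha>" "\<alpha> < r" and \<beta>_range: "0 < \<beta>" "\<beta> \<le> r" by auto
  have in_F: "y \<in> PL_F r \<Lambda> A" if "y \<in> FI" for y
    using that unfolding FI_def by (rule PL_F_on_PL_F)
  have fixes_ends: "y \<alpha> = \<alpha>" "y \<beta> = \<beta>" if "y \<in> FI" for y
    using that unfolding FI_def by (auto intro: PL_F_on_ident_outside)
  show ?thesis
  proof (intro conjI ballI inj_onI)
    fix y assume "y \<in> FI"
    show "rslope y \<alpha> \<in> \<Lambda>" using PL_F_right_germ[OF in_F[OF \<open>y \<in> FI\<close>] \<alpha>_range] by blast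
    show "lslope y \<beta> \<in> \<Lambda>" using PL_F_left_germ[OF in_F[OF \<open>y \<in> FI\<close>] Lam_pos \<beta>_range] by blast
  next
    fix y z assume "y \<in> FI" "z \<in> FI"
    show "rslope (z \<circ> y) \<alpha> = rslope y \<alpha> * rslope z \<alpha>"
      using rslope_comp[OF Lam_pos in_F in_F \<alpha>_range] fixes_ends \<open>y \<in> FI\<close> \<open>z \<in> FI\<close> by blast
    show "lslope (z \<circ> y) \<beta> = lslope y \<beta> * lslope z \<beta>"
      using lslope_comp[OF Lam_pos in_F in_F \<beta>_range] fixes_ends \<open>y \<in> FI\<close> \<open>z \<in> FI\<close> by blast
  next
    fix y z assume "y \<in> C" "z \<in> C" "rslope y \<alpha> = rslope z \<alpha>"
    thus "y = z" using centralizer_rslope_inj[OF I x_mem x_fix] unfolding C_def by blast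
  next
    fix y z assume "y \<in> C" "z \<in> C" "lslope y \<beta> = lslope z \<beta>"
    thus "y = z" using centralizer_lslope_inj[OF Lam_pos I x_mem x_fix] unfolding C_def by blast
  qed
qed

end
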